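(* Let $\mathcal S=(E,\mathcal I)$ be an $r$-covering system. If $\texttt{a}$ and $\texttt{a}'$ are two activities of $\mathcal S$, then they have the same activity vector (equivalently, the same activity polynomial).
   Context: For finite sets $X\subseteq Y$, write $[X,Y]=\{Z: X\subseteq Z\subseteq Y\}$. An $r$-covering system is a pair $\mathcal S=(E,\mathcal I)$ where $E$ is a finite set and $\mathcal I$ is a collection of subsets of $E$, each of cardinality at most $r$, such that for every $I\in\mathcal I$ there exists $B\in\mathcal I$ with $|B|=r$ and $[I,B]\subseteq\mathcal I$. Members of $\mathcal I$ of cardinality $r$ are called bases, and $\mathcal B$ denotes the set of bases. An activity of $\mathcal S$ is a function $\texttt{a}:\mathcal B\to 2^E$ such that for every $B\in\mathcal B$, $\texttt{a}(B)\subseteq B$ and $[B\setminus\texttt{a}(B),B]\subseteq\mathcal I$, and such that every $I\in\mathcal I$ belongs to $[B\setminus\texttt{a}(B),B]$ for exactly one $B\in\mathcal B$. The activity vector is $(a_0,\dots,a_r)$ where $a_i$ is the number of bases $B$ with $|\texttt{a}(B)|=i$. *)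

theory Defs
  imports Main
begin

definition interval :: "'a set \<Rightarrow> 'a set \<Rightarrow> 'a set set" where
  "interval X Y = {Z. X \<subseteq> Z \<and> Z \<subseteq> Y}"

definition covering_system :: "nat \<Rightarrow> 'a set \<Rightarrow> 'a set set \<Rightarrow> bool" where
  "covering_system r E \<I> \<longleftrightarrow> finite E \<and>
     (\<forall>I\<in>\<I>. I \<subseteq> E \<and> card I \<le> r) \<and>
     (\<forall>I\<in>\<I>. \<exists>B\<in>\<I>. card B = r \<and> interval I B \<subseteq> \<I>)"

definition bases :: "nat \<Rightarrow> 'a set set \<Rightarrow> 'a set set" where
  "bases r \<I> = {B \<in> \<I>. card B = r}"

definition activity :: "nat \<Rightarrow> 'a set \<Rightarrow> 'a set set \<Rightarrow> ('a set \<Rightarrow> 'a set) \<Rightarrow> bool" where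
  "activity r E \<I> a \<longleftrightarrow>
     (\<forall>B\<in>bases r \<I>. a B \<subseteq> B \<and> interval (B - a B) B \<subseteq> \<I>) \<and>
     (\<forall>I\<in>\<I>. \<exists>!B. B \<in> bases r \<I> \<and> I \<in> interval (B - a B) B)"

definition activity_vector :: "nat \<Rightarrow> 'a set set \<Rightarrow> ('a set \<Rightarrow> 'a set) \<Rightarrow> nat list" where
  "activity_vector r \<I> a = map (\<lambda>i. card {B \<in> bases r \<I>. card (a B) = i}) [0..<Suc r]"

end

theory Submission
  imports Defs
begin

text \<open>Counting the members of \<open>\<I>\<close> of cardinality \<open>r - j\<close> through the partition of \<open>\<I>\<close> into the
  intervals \<open>[B - a B, B]\<close> gives \<open>\<Sum>\<^sub>i a\<^sub>i (i choose j)\<close>, a quantity independent of the activity.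
  The system of these identities for \<open>j = 0, \<dots>, r\<close> is unitriangular, so it determines the
  activity vector.\<close>

lemma binomial_sums_eq_imp_eq:
  fixes n m :: "nat \<Rightarrow> nat"
  assumes sums_eq: "\<And>j. j \<le> r \<Longrightarrow> (\<Sum>i\<le>r. n i * (i choose j)) = (\<Sum>i\<le>r. m i * (i choose j))"
    and "i \<le> r"
  shows "n i = m i"
  using \<open>i \<le> r\<close>
proof (induction "r - i" arbitrary: i rule: less_induct)
  case (less i)
  have higher_eq: "(\<Sum>k\<in>{..r}-{i}. n k * (k choose i)) = (\<Sum>k\<in>{..r}-{i}. m k * (k choose i))"
  proof (rule sum.cong)
    fix k assume k: "k \<in> {..r} - {i}"
    show "n k * (k choose i) = m k * (k choose i)"
    proof (cases "k < i")
      case False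
      with k less.prems have "n k = m k" by (intro less.hyps) auto
      then show ?thesis by simp
    qed simp
  qed simp
  have "\<And>f :: nat \<Rightarrow> nat. (\<Sum>k\<le>r. f k * (k choose i)) = f i + (\<Sum>k\<in>{..r}-{i}. f k * (k choose i))"
    using less.prems by (subst sum.remove[of _ i]) auto
  then show ?case
    using sums_eq[OF less.prems] higher_eq by simp
qed

lemma card_interval_card_eq:
  assumes "finite B" and "A \<subseteq> B" and "j \<le> card B"
  shows "card {I \<in> interval (B - A) B. card I = card B - j} = card A choose j"
proof -
  let ?subsets = "{S. S \<subseteq> A \<and> card S = j}"
  have "{I \<in> interval (B - A) B. card I = card B - j} = (\<lambda>S. B - S) ` ?subsets"
  proof (intro set_eqI iffI)
    fix I assume "I \<in> {I \<in> interval (B - A) B. card I = card B - j}"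
    then have I: "B - A \<subseteq> I" "I \<subseteq> B" "card I = card B - j" by (auto simp: interval_def)
    then have "B - I \<in> ?subsets"
      using assms by (auto simp: card_Diff_subset finite_subset)
    moreover have "I = B - (B - I)" using I by auto
    ultimately show "I \<in> (\<lambda>S. B - S) ` ?subsets" by blast
  next
    fix I assume "I \<in> (\<lambda>S. B - S) ` ?subsets"
    then obtain S where "S \<subseteq> A" "card S = j" "I = B - S" by auto
    then show "I \<in> {I \<in> interval (B - A) B. card I = card B - j}"
      using assms by (auto simp: interval_def card_Diff_subset finite_subset)
  qed
  moreover have "inj_on (\<lambda>S. B - S) ?subsets"
    using \<open>A \<subseteq> B\<close> by (intro inj_onI) blast
  ultimately have "card {I \<in> interval (B - A) B. card I = card B - j} = card ?subsets"
    by (simp add: card_image)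
  also have "\<dots> = card A choose j"
    using assms by (simp add: n_subsets finite_subset)
  finally show ?thesis .
qed

lemma covering_system_finite:
  assumes "covering_system r E \<I>"
  shows "finite \<I>" and "\<And>I. I \<in> \<I> \<Longrightarrow> finite I"
proof -
  have "finite E" and "\<I> \<subseteq> Pow E"
    using assms by (auto simp: covering_system_def)
  then show "finite \<I>" and "\<And>I. I \<in> \<I> \<Longrightarrow> finite I"
    by (auto intro: finite_subset)
qed

lemma activity_card_partition:
  assumes "finite \<I>" and act: "activity r E \<I> a"
  shows "card {I \<in> \<I>. P I} = (\<Sum>B\<in>bases r \<I>. card {I \<in> interval (B - a B) B. P I})"
proof -
  have interval_sub: "\<forall>B\<in>bases r \<I>. interval (B - a B) B \<subseteq> \<I>"
    and unique: "\<forall>I\<in>\<I>. \<exists>!B. B \<in> bases r \<I> \<and> I \<in> interval (B - a B) B"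
    using act by (auto simp: activity_def)
  have "{I \<in> \<I>. P I} = (\<Union>B\<in>bases r \<I>. {I \<in> interval (B - a B) B. P I})"
  proof (intro set_eqI iffI)
    fix I assume "I \<in> {I \<in> \<I>. P I}"
    then show "I \<in> (\<Union>B\<in>bases r \<I>. {I \<in> interval (B - a B) B. P I})"
      using unique by blast
  next
    fix I assume "I \<in> (\<Union>B\<in>bases r \<I>. {I \<in> interval (B - a B) B. P I})"
    then show "I \<in> {I \<in> \<I>. P I}" using interval_sub by blast
  qed
  moreover have "finite (bases r \<I>)"
    using \<open>finite \<I>\<close> by (simp add: bases_def)
  moreover have "\<forall>B\<in>bases r \<I>. finite {I \<in> interval (B - a B) B. P I}"
  proof
    fix B assume "B \<in> bases r \<I>"
    then have "{I \<in> interval (B - a B) B. P I} \<subseteq> \<I>" using interval_sub by auto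
    then show "finite {I \<in> interval (B - a B) B. P I}" using \<open>finite \<I>\<close> by (rule finite_subset)
  qed
  moreover have "\<forall>B\<in>bases r \<I>. \<forall>B'\<in>bases r \<I>. B \<noteq> B' \<longrightarrow>
      {I \<in> interval (B - a B) B. P I} \<inter> {I \<in> interval (B' - a B') B'. P I} = {}"
  proof (intro ballI impI equals0I)
    fix B B' I assume B: "B \<in> bases r \<I>" "B' \<in> bases r \<I>" "B \<noteq> B'"
      and "I \<in> {I \<in> interval (B - a B) B. P I} \<inter> {I \<in> interval (B' - a B') B'. P I}"
    then have I: "I \<in> interval (B - a B) B" "I \<in> interval (B' - a B') B'" by auto
    then have "I \<in> \<I>" using interval_sub B by blast
    then show False using unique I B by blast
  qed
  ultimately show ?thesis
    by (simp add: card_UN_disjoint)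
qed

lemma card_indep_eq_activity_sum:
  assumes cs: "covering_system r E \<I>" and act: "activity r E \<I> a" and "j \<le> r"
  shows "card {I \<in> \<I>. card I = r - j}
           = (\<Sum>i\<le>r. card {B \<in> bases r \<I>. card (a B) = i} * (i choose j))"
proof -
  have active_sub: "\<And>B. B \<in> bases r \<I> \<Longrightarrow> a B \<subseteq> B"
    using act by (auto simp: activity_def)
  have base_finite: "\<And>B. B \<in> bases r \<I> \<Longrightarrow> finite B" and base_card: "\<And>B. B \<in> bases r \<I> \<Longrightarrow> card B = r"
    using covering_system_finite(2)[OF cs] by (auto simp: bases_def)
  have "card {I \<in> \<I>. card I = r - j}
          = (\<Sum>B\<in>bases r \<I>. card {I \<in> interval (B - a B) B. card I = r - j})"
    using activity_card_partition[OF covering_system_finite(1)[OF cs] act] .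
  also have "\<dots> = (\<Sum>B\<in>bases r \<I>. card (a B) choose j)"
  proof (rule sum.cong[OF refl])
    fix B assume "B \<in> bases r \<I>"
    then show "card {I \<in> interval (B - a B) B. card I = r - j} = card (a B) choose j"
      using card_interval_card_eq[of B "a B" j] base_finite active_sub base_card \<open>j \<le> r\<close> by simp
  qed
  also have "\<dots> = (\<Sum>i\<le>r. \<Sum>B\<in>{B \<in> bases r \<I>. card (a B) = i}. card (a B) choose j)"
  proof (rule sum.group[symmetric])
    show "finite (bases r \<I>)"
      using covering_system_finite(1)[OF cs] by (simp add: bases_def)
    show "(\<lambda>B. card (a B)) ` bases r \<I> \<subseteq> {..r}"
    proof (rule image_subsetI)
      fix B assume "B \<in> bases r \<I>"
      then have "card (a B) \<le> card B"
        using base_finite active_sub by (intro card_mono)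
      then show "card (a B) \<in> {..r}"
        using \<open>B \<in> bases r \<I>\<close> base_card by simp
    qed
  qed simp
  also have "\<dots> = (\<Sum>i\<le>r. card {B \<in> bases r \<I>. card (a B) = i} * (i choose j))"
    by (intro sum.cong) auto
  finally show ?thesis .
qed

theorem mainTheorem4:
  fixes E :: "'a set" and \<I> :: "'a set set" and r :: nat
    and a a' :: "'a set \<Rightarrow> 'a set"
  assumes "covering_system r E \<I>"
    and "activity r E \<I> a"
    and "activity r E \<I> a'"
  shows "activity_vector r \<I> a = activity_vector r \<I> a'"
proof -
  have "card {B \<in> bases r \<I>. card (a B) = i} = card {B \<in> bases r \<I>. card (a' B) = i}"
    if "i \<le> r" for i
  proof (rule binomial_sums_eq_imp_eq[OF _ that])
    fix j assume "j \<le> r"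
    show "(\<Sum>i\<le>r. card {B \<in> bases r \<I>. card (a B) = i} * (i choose j))
        = (\<Sum>i\<le>r. card {B \<in> bases r \<I>. card (a' B) = i} * (i choose j))"
      using card_indep_eq_activity_sum[OF assms(1,2) \<open>j \<le> r\<close>]
        card_indep_eq_activity_sum[OF assms(1,3) \<open>j \<le> r\<close>] by (rule trans[OF sym])
  qed
  then show ?thesis
    unfolding activity_vector_def by (intro map_cong) auto
qed

end
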